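(* Let $f$ be an L-additive arithmetic function whose associated completely multiplicative function $h_f$ is nonzero-valued, and let $\Lambda_f$ be the generalized von Mangoldt function associated to $f$. Then for every positive integer $n$, $$\Lambda_f(n)=\sum_{d\mid n}\mu\!\left(\frac{n}{d}\right)\frac{f(d)}{h_f(d)}=-\sum_{d\mid n}\frac{\mu(d)f(d)}{h_f(d)},$$ i.e. $\Lambda_f=\mu\ast\frac{f}{h_f}=-1\ast\frac{\mu f}{h_f}$.
   Context: An arithmetic function $f:\mathbb{N}\to\mathbb{C}$ is L-additive if there is a completely multiplicative function $h_f$ such that $f(mn)=f(m)h_f(n)+f(n)h_f(m)$ for all positive integers $m,n$; such an $h_f$ is fixed. $\Lambda_f(n)=\frac{f(p)}{h_f(p)}$ if $n=p^k$ for some prime $p$ and integer $k\geq 1$, and $\Lambda_f(n)=0$ otherwise. $\mu$ is the Möbius function, $1$ denotes the constant function $1(n)=1$, $\ast$ is Dirichlet convolution $(F\ast G)(n)=\sum_{d\mid n}F(d)G(n/d)$, and quotients/products of arithmetic functions such as $f/h_f$, $\mu f/h_f$ are pointwise. *)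

theory Defs
  imports Complex_Main "HOL-Computational_Algebra.Squarefree"
begin

definition completely_multiplicative :: "(nat \<Rightarrow> complex) \<Rightarrow> bool" where
  "completely_multiplicative h \<longleftrightarrow>
     h 1 = 1 \<and> (\<forall>m n. m > 0 \<longrightarrow> n > 0 \<longrightarrow> h (m * n) = h m * h n)"

definition L_additive_wrt :: "(nat \<Rightarrow> complex) \<Rightarrow> (nat \<Rightarrow> complex) \<Rightarrow> bool" where
  "L_additive_wrt f h \<longleftrightarrow> completely_multiplicative h \<and>
     (\<forall>m n. m > 0 \<longrightarrow> n > 0 \<longrightarrow> f (m * n) = f m * h n + f n * h m)"

definition mu :: "nat \<Rightarrow> complex" where
  "mu n = (if n = 0 \<or> \<not> squarefree n then 0 else (-1) ^ card (prime_factors n))"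

definition Lambda_f :: "(nat \<Rightarrow> complex) \<Rightarrow> (nat \<Rightarrow> complex) \<Rightarrow> nat \<Rightarrow> complex" where
  "Lambda_f f h n =
     (if \<exists>p k. prime p \<and> k \<ge> 1 \<and> n = p ^ k
      then (let p = (THE p. prime p \<and> (\<exists>k\<ge>1. n = p ^ k)) in f p / h p)
      else 0)"

end

theory Submission
  imports Defs
begin

text \<open>Since h is completely multiplicative and nowhere zero, g = f / h is completely additive:
g(m n) = g(m) + g(n). Write n = p^a m with p not dividing m. Only the divisors of n not divisible
by p^2 contribute to a Moebius sum, and these are e and p e with e | m; as \<mu>(p e) = -\<mu>(e),
  \<Sum>_{d | n} \<mu>(d) g(d) = \<Sum>_{e | m} \<mu>(e) (g(e) - g(p e)) = -g(p) \<Sum>_{e | m} \<mu>(e),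
which is -g(p) if n is a power of p and 0 otherwise, that is -\<Lambda>_f(n).
The first identity follows by substituting d \<mapsto> n/d and expanding g(n/d) = g(n) - g(d):
the term g(n) \<Sum>_{d | n} \<mu>(d) vanishes, for n = 1 because g(1) = 0.\<close>

lemma mu_1 [simp]: "mu 1 = 1"
  by (simp add: mu_def)

lemma mu_prime_mult:
  assumes p: "prime p" and "\<not> p dvd e" "e > 0"
  shows "mu (p * e) = - mu e"
proof -
  have "coprime p e" using assms by (simp add: prime_imp_coprime)
  then have squarefree: "squarefree (p * e) \<longleftrightarrow> squarefree e"
    using squarefree_mult_coprime squarefree_prime[OF p] squarefree_multD(2) by blast
  have "prime_factors (p * e) = insert p (prime_factors e)"
    using assms by (simp add: prime_factors_product prime_prime_factors prime_gt_0_nat)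
  moreover have "p \<notin> prime_factors e" using assms by auto
  ultimately have "card (prime_factors (p * e)) = Suc (card (prime_factors e))" by simp
  then show ?thesis using squarefree assms by (simp add: mu_def)
qed

lemma mu_eq_0_if_prime_square_dvd:
  assumes "prime p" "p\<^sup>2 dvd d"
  shows "mu d = 0"
  using assms by (auto simp: mu_def squarefree_def)

lemma divisors_prime_power_mult_not_dvd:
  fixes p m :: nat
  assumes "prime p" "\<not> p dvd m"
  shows "{d. d dvd p ^ a * m \<and> \<not> p dvd d} = {e. e dvd m}"
proof safe
  fix d assume "d dvd p ^ a * m" "\<not> p dvd d"
  moreover from \<open>\<not> p dvd d\<close> have "coprime d p"
    using assms(1) by (metis prime_imp_coprime coprime_commute)
  then have "coprime d (p ^ a)" by simp
  ultimately show "d dvd m" by (simp add: coprime_dvd_mult_right_iff)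
next
  fix d assume "d dvd m" "p dvd d"
  then show False using assms(2) dvd_trans by blast
qed auto

lemma divisors_prime_power_mult_exactly_dvd:
  fixes p m :: nat
  assumes p: "prime p" and "a \<ge> 1" "\<not> p dvd m"
  shows "{d. d dvd p ^ a * m \<and> p dvd d \<and> \<not> p\<^sup>2 dvd d} = (*) p ` {e. e dvd m}"
proof (intro equalityI subsetI)
  fix d assume "d \<in> {d. d dvd p ^ a * m \<and> p dvd d \<and> \<not> p\<^sup>2 dvd d}"
  then have d: "d dvd p ^ a * m" "p dvd d" "\<not> p\<^sup>2 dvd d" by simp_all
  then obtain e where e: "d = p * e" by blast
  have "\<not> p dvd e" using d(3) e by (auto simp: power2_eq_square)
  have "p ^ a = p * p ^ (a - 1)" using \<open>a \<ge> 1\<close> by (simp add: power_eq_if)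
  then have "p * e dvd p * (p ^ (a - 1) * m)" using d(1) e by (simp add: mult.assoc)
  then have "e dvd p ^ (a - 1) * m" using p by (simp add: prime_gt_0_nat)
  then have "e dvd m"
    using divisors_prime_power_mult_not_dvd[OF p assms(3)] \<open>\<not> p dvd e\<close> by blast
  then show "d \<in> (*) p ` {e. e dvd m}" using e by blast
next
  fix d assume "d \<in> (*) p ` {e. e dvd m}"
  then obtain e where e: "d = p * e" "e dvd m" by blast
  have "p dvd p ^ a" using \<open>a \<ge> 1\<close> by simp
  then have "d dvd p ^ a * m" using e by (simp add: mult_dvd_mono)
  moreover have "\<not> p\<^sup>2 dvd d"
  proof
    assume "p\<^sup>2 dvd d"
    then have "p dvd e" using e(1) p by (simp add: power2_eq_square prime_gt_0_nat)
    then show False using e(2) assms(3) dvd_trans by blast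
  qed
  ultimately show "d \<in> {d. d dvd p ^ a * m \<and> p dvd d \<and> \<not> p\<^sup>2 dvd d}" using e by simp
qed

lemma sum_dvd_prime_power_mult_mu:
  fixes F :: "nat \<Rightarrow> complex"
  assumes p: "prime p" and "a \<ge> 1" "\<not> p dvd m" "m > 0"
  shows "(\<Sum>d | d dvd p ^ a * m. mu d * F d) = (\<Sum>e | e dvd m. mu e * (F e - F (p * e)))"
proof -
  let ?n = "p ^ a * m"
  let ?A = "{d. d dvd ?n \<and> \<not> p dvd d}" and ?B = "{d. d dvd ?n \<and> p dvd d \<and> \<not> p\<^sup>2 dvd d}"
  have finite: "finite {d. d dvd ?n}" using assms by (simp add: prime_gt_0_nat)
  have "(\<Sum>d | d dvd ?n. mu d * F d) = (\<Sum>d | d dvd ?n \<and> \<not> p\<^sup>2 dvd d. mu d * F d)"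
    using finite mu_eq_0_if_prime_square_dvd[OF p] by (intro sum.mono_neutral_right) auto
  also have "{d. d dvd ?n \<and> \<not> p\<^sup>2 dvd d} = ?A \<union> ?B"
    by (auto simp: power2_eq_square)
  also have "(\<Sum>d \<in> ?A \<union> ?B. mu d * F d) = (\<Sum>d \<in> ?A. mu d * F d) + (\<Sum>d \<in> ?B. mu d * F d)"
    using finite by (intro sum.union_disjoint) auto
  also have "(\<Sum>d \<in> ?B. mu d * F d) = (\<Sum>e | e dvd m. mu (p * e) * F (p * e))"
    unfolding divisors_prime_power_mult_exactly_dvd[OF assms(1-3)] using p
    by (subst sum.reindex) (auto simp: inj_on_def prime_gt_0_nat)
  also have "\<dots> = (\<Sum>e | e dvd m. - mu e * F (p * e))"
  proof (intro sum.cong refl)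
    fix e assume "e \<in> {e. e dvd m}"
    then have "\<not> p dvd e" "e > 0" using assms(3,4) dvd_trans by (blast, auto intro: gr0I)
    then show "mu (p * e) * F (p * e) = - mu e * F (p * e)" by (simp add: mu_prime_mult p)
  qed
  finally show ?thesis
    unfolding divisors_prime_power_mult_not_dvd[OF assms(1,3)]
    by (simp add: sum.distrib[symmetric] sum_negf[symmetric] algebra_simps)
qed

lemma split_off_prime_power:
  assumes "n > (1::nat)"
  obtains p a m where "prime p" "a \<ge> 1" "\<not> p dvd m" "m > 0" "n = p ^ a * m"
proof -
  have "n \<noteq> 1" using assms by simp
  then obtain p where p: "prime p" "p dvd n" using prime_factor_nat by blast
  have "n \<noteq> 0" "\<not> is_unit p" using assms p by auto
  then obtain m where m: "n = p ^ multiplicity p n * m" "\<not> p dvd m"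
    by (rule multiplicity_decompose')
  have "multiplicity p n \<ge> 1" using p assms prime_multiplicity_gt_zero_iff[of p n] by simp
  moreover have "m > 0" using m assms by (auto intro: gr0I)
  ultimately show ?thesis using that p m by blast
qed

lemma sum_mu_dvd:
  assumes "n > 0"
  shows "(\<Sum>d | d dvd n. mu d) = (if n = 1 then 1 else 0)"
proof (cases "n = 1")
  case False
  with assms have "n > 1" by simp
  then obtain p a m where pam: "prime p" "a \<ge> 1" "\<not> p dvd m" "m > 0" and n: "n = p ^ a * m"
    by (rule split_off_prime_power)
  have "(\<Sum>d | d dvd n. mu d) = 0"
    using sum_dvd_prime_power_mult_mu[OF pam, of "\<lambda>_. 1"] unfolding n by simp
  then show ?thesis using False by simp
qed (simp add: mu_def)

lemma sum_mu_dvd_times_additive: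
  fixes g :: "nat \<Rightarrow> complex"
  assumes add: "\<And>m n. m > 0 \<Longrightarrow> n > 0 \<Longrightarrow> g (m * n) = g m + g n"
    and pam: "prime p" "a \<ge> 1" "\<not> p dvd m" "m > 0"
  shows "(\<Sum>d | d dvd p ^ a * m. mu d * g d) = (if m = 1 then - g p else 0)"
proof -
  have "(\<Sum>d | d dvd p ^ a * m. mu d * g d) = (\<Sum>e | e dvd m. mu e * (g e - g (p * e)))"
    by (rule sum_dvd_prime_power_mult_mu[OF pam])
  also have "\<dots> = (\<Sum>e | e dvd m. - g p * mu e)"
  proof (intro sum.cong refl)
    fix e assume "e \<in> {e. e dvd m}"
    then have "e > 0" using pam(4) by (auto intro: gr0I)
    then show "mu e * (g e - g (p * e)) = - g p * mu e"
      using add[of p e] pam(1) by (simp add: prime_gt_0_nat algebra_simps)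
  qed
  also have "\<dots> = - g p * (if m = 1 then 1 else 0)"
    by (simp only: sum_distrib_left[symmetric] sum_mu_dvd[OF pam(4)])
  finally show ?thesis by simp
qed

lemma sum_mu_div_dvd_times_additive:
  fixes g :: "nat \<Rightarrow> complex"
  assumes add: "\<And>m n. m > 0 \<Longrightarrow> n > 0 \<Longrightarrow> g (m * n) = g m + g n"
    and "n > 0"
  shows "(\<Sum>d | d dvd n. mu (n div d) * g d) = - (\<Sum>d | d dvd n. mu d * g d)"
proof -
  have "(\<Sum>d | d dvd n. mu (n div d) * g d) = (\<Sum>d | d dvd n. mu d * g (n div d))"
    by (rule sum.reindex_bij_witness[of _ "\<lambda>d. n div d" "\<lambda>d. n div d"])
       (use \<open>n > 0\<close> in \<open>auto simp: dvd_div_eq_mult div_div_eq_right dvd_div_iff_mult\<close>)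
  also have "\<dots> = (\<Sum>d | d dvd n. g n * mu d - mu d * g d)"
  proof (intro sum.cong refl)
    fix d assume "d \<in> {d. d dvd n}"
    then have "d > 0" "n div d > 0" "n = d * (n div d)"
      using \<open>n > 0\<close> by (auto intro: gr0I)
    then have "g n = g d + g (n div d)" using add by metis
    then show "mu d * g (n div d) = g n * mu d - mu d * g d" by (simp add: algebra_simps)
  qed
  also have "\<dots> = g n * (\<Sum>d | d dvd n. mu d) - (\<Sum>d | d dvd n. mu d * g d)"
    by (simp add: sum_subtractf sum_distrib_left)
  also have "g n * (\<Sum>d | d dvd n. mu d) = 0"
    using sum_mu_dvd[OF \<open>n > 0\<close>] add[of 1 1] by simp
  finally show ?thesis by simp
qed

lemma Lambda_f_1: "Lambda_f f h 1 = 0"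
proof -
  have "\<not> (\<exists>p k. prime p \<and> k \<ge> 1 \<and> (1::nat) = p ^ k)"
    by (metis one_eq_prime_power_iff not_one_le_zero)
  then show ?thesis unfolding Lambda_f_def by (rule if_not_P)
qed

lemma not_prime_power_prime_power_mult:
  fixes p m :: nat
  assumes "prime p" "a \<ge> 1" "\<not> p dvd m" "m > 1"
  shows "\<not> (\<exists>q k. prime q \<and> k \<ge> 1 \<and> p ^ a * m = q ^ k)"
proof
  assume "\<exists>q k. prime q \<and> k \<ge> 1 \<and> p ^ a * m = q ^ k"
  then obtain q k where q: "prime q" and n: "p ^ a * m = q ^ k" by blast
  have prime_dvd_eq_q: "r = q" if "prime r" "r dvd p ^ a * m" for r
    using that q n prime_dvd_power primes_dvd_imp_eq by metis
  obtain r where r: "prime r" "r dvd m" using \<open>m > 1\<close> prime_factor_nat[of m] by auto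
  have "p dvd p ^ a * m" using \<open>a \<ge> 1\<close> by simp
  then have "p = q" using prime_dvd_eq_q \<open>prime p\<close> by blast
  moreover have "r = q" using prime_dvd_eq_q[of r] r by simp
  ultimately show False using r \<open>\<not> p dvd m\<close> by simp
qed

lemma Lambda_f_prime_power_mult:
  assumes "prime p" "a \<ge> 1" "\<not> p dvd m" "m > 0"
  shows "Lambda_f f h (p ^ a * m) = (if m = 1 then f p / h p else 0)"
proof (cases "m = 1")
  case True
  have "(THE q. prime q \<and> (\<exists>k\<ge>1. p ^ a = q ^ k)) = p"
  proof (rule the_equality)
    show "prime p \<and> (\<exists>k\<ge>1. p ^ a = p ^ k)" using assms(1,2) by blast
  next
    fix q assume "prime q \<and> (\<exists>k\<ge>1. p ^ a = q ^ k)"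
    then show "q = p" using assms(1,2) prime_power_inj'(1)[of p q a] by auto
  qed
  moreover have "\<exists>q k. prime q \<and> k \<ge> 1 \<and> p ^ a = q ^ k" using assms(1,2) by blast
  ultimately show ?thesis using True unfolding Lambda_f_def by (simp add: Let_def)
next
  case False
  with assms(4) have "m > 1" by simp
  then have "\<not> (\<exists>q k. prime q \<and> k \<ge> 1 \<and> p ^ a * m = q ^ k)"
    by (rule not_prime_power_prime_power_mult[OF assms(1-3)])
  then have "Lambda_f f h (p ^ a * m) = 0" unfolding Lambda_f_def by (rule if_not_P)
  then show ?thesis using False by simp
qed

lemma L_additive_divide_add:
  assumes "L_additive_wrt f h" "\<And>m. m > 0 \<Longrightarrow> h m \<noteq> 0" "m > 0" "n > 0"
  shows "f (m * n) / h (m * n) = f m / h m + f n / h n"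
  using assms unfolding L_additive_wrt_def completely_multiplicative_def
  by (auto simp: field_simps)

lemma sum_mu_dvd_times_L_additive:
  assumes "L_additive_wrt f h" "\<And>m. m > 0 \<Longrightarrow> h m \<noteq> 0" "n > 0"
  shows "(\<Sum>d | d dvd n. mu d * (f d / h d)) = - Lambda_f f h n"
proof (cases "n = 1")
  case True
  have g1: "f 1 / h 1 = 0" using L_additive_divide_add[OF assms(1,2), of 1 1] by auto
  have "(\<Sum>d | d dvd n. mu d * (f d / h d)) = mu 1 * (f 1 / h 1)" using True by simp
  also have "\<dots> = - Lambda_f f h n" unfolding g1 True Lambda_f_1 by simp
  finally show ?thesis .
next
  case False
  with assms(3) have "n > 1" by simp
  then obtain p a m where pam: "prime p" "a \<ge> 1" "\<not> p dvd m" "m > 0" and n: "n = p ^ a * m"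
    by (rule split_off_prime_power)
  have "(\<Sum>d | d dvd n. mu d * (f d / h d)) = (if m = 1 then - (f p / h p) else 0)"
    unfolding n using L_additive_divide_add[OF assms(1,2)] pam by (rule sum_mu_dvd_times_additive)
  then show ?thesis unfolding n Lambda_f_prime_power_mult[OF pam] by simp
qed

theorem theorem2p2:
  fixes f h :: "nat \<Rightarrow> complex" and n :: nat
  assumes "L_additive_wrt f h"
    and "\<And>m. m > 0 \<Longrightarrow> h m \<noteq> 0"
    and "n > 0"
  shows "Lambda_f f h n = (\<Sum>d | d dvd n. mu (n div d) * (f d / h d)) \<and>
         Lambda_f f h n = - (\<Sum>d | d dvd n. mu d * f d / h d)"
proof -
  have "(\<Sum>d | d dvd n. mu d * (f d / h d)) = - Lambda_f f h n"
    by (rule sum_mu_dvd_times_L_additive[OF assms])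
  moreover have
    "(\<Sum>d | d dvd n. mu (n div d) * (f d / h d)) = - (\<Sum>d | d dvd n. mu d * (f d / h d))"
    using L_additive_divide_add[OF assms(1,2)] assms(3) by (rule sum_mu_div_dvd_times_additive)
  ultimately show ?thesis unfolding times_divide_eq_right[symmetric] by simp
qed

end
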